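(* Let $D$ be the automaton built from complete DFAs $A,B,C$ as described in the context. For every state $(i,S)$ of $D$, the state $(i,\mathrm{Sat}(S))$ is equivalent to $(i,S)$.
   Context: Let $A=(\Sigma,Q_A=\{0,\dots,m-1\},0,F_A,\cdot)$, $B=(\Sigma,Q_B=\{q_0,\dots,q_{n-1}\},q_0,F_B,\cdot)$, $C=(\Sigma,Q_C=\{r_0,\dots,r_{p-1}\},r_0,F_C,\cdot)$ be complete DFAs. $D=(\Sigma,Q_A\times 2^{Q_B\times Q_C},i_D,F_D,\cdot)$ where $i_D=(0,\emptyset)$ if $0\notin F_A$ and $i_D=(0,\{(q_0,r_0)\})$ otherwise; $(i,S)\in F_D$ iff $S$ contains a pair $(q,r)$ with exactly one of $q\in F_B$, $r\in F_C$; and for $a\in\Sigma$, $(i,S)\cdot a=(i\cdot a,S\cdot a)$ if $i\cdot a\notin F_A$ and $(i\cdot a,S\cdot a\cup\{(q_0,r_0)\})$ otherwise, with $S\cdot a=\{(q\cdot a,r\cdot a):(q,r)\in S\}$. Two states are equivalent if no word leads exactly one of them to $F_D$. A tableau $S\subseteq Q_B\times Q_C$ is saturated if whenever $(q_x,r_{x'}),(q_x,r_{y'}),(q_y,r_{y'})\in S$ then $(q_y,r_{x'})\in S$; $\mathrm{Sat}(S)$ is the smallest saturated tableau containing $S$. *)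

theory Defs
  imports Main
begin

definition complete_dfa ::
  "'s set \<Rightarrow> 'q set \<Rightarrow> 'q \<Rightarrow> 'q set \<Rightarrow> ('q \<Rightarrow> 's \<Rightarrow> 'q) \<Rightarrow> bool" where
  "complete_dfa Alph Q q0 F delta \<longleftrightarrow>
     finite Alph \<and> finite Q \<and> q0 \<in> Q \<and> F \<subseteq> Q \<and>
     (\<forall>q\<in>Q. \<forall>a\<in>Alph. delta q a \<in> Q)"

definition D_step ::
  "('qa \<Rightarrow> 's \<Rightarrow> 'qa) \<Rightarrow> 'qa set \<Rightarrow> ('qb \<Rightarrow> 's \<Rightarrow> 'qb) \<Rightarrow> 'qb \<Rightarrow>
   ('qc \<Rightarrow> 's \<Rightarrow> 'qc) \<Rightarrow> 'qc \<Rightarrow>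
   ('qa \<times> ('qb \<times> 'qc) set) \<Rightarrow> 's \<Rightarrow> ('qa \<times> ('qb \<times> 'qc) set)" where
  "D_step dA FA dB q0 dC r0 st a =
     (let i' = dA (fst st) a;
          S' = (\<lambda>(q, r). (dB q a, dC r a)) ` snd st
      in if i' \<in> FA then (i', insert (q0, r0) S') else (i', S'))"

definition D_run ::
  "('qa \<Rightarrow> 's \<Rightarrow> 'qa) \<Rightarrow> 'qa set \<Rightarrow> ('qb \<Rightarrow> 's \<Rightarrow> 'qb) \<Rightarrow> 'qb \<Rightarrow>
   ('qc \<Rightarrow> 's \<Rightarrow> 'qc) \<Rightarrow> 'qc \<Rightarrow>
   ('qa \<times> ('qb \<times> 'qc) set) \<Rightarrow> 's list \<Rightarrow> ('qa \<times> ('qb \<times> 'qc) set)" where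
  "D_run dA FA dB q0 dC r0 st w = foldl (D_step dA FA dB q0 dC r0) st w"

definition D_final :: "'qb set \<Rightarrow> 'qc set \<Rightarrow> ('qa \<times> ('qb \<times> 'qc) set) \<Rightarrow> bool" where
  "D_final FB FC st \<longleftrightarrow> (\<exists>(q, r) \<in> snd st. (q \<in> FB) \<noteq> (r \<in> FC))"

definition D_equiv ::
  "'s set \<Rightarrow> ('qa \<Rightarrow> 's \<Rightarrow> 'qa) \<Rightarrow> 'qa set \<Rightarrow> ('qb \<Rightarrow> 's \<Rightarrow> 'qb) \<Rightarrow> 'qb \<Rightarrow> 'qb set \<Rightarrow>
   ('qc \<Rightarrow> 's \<Rightarrow> 'qc) \<Rightarrow> 'qc \<Rightarrow> 'qc set \<Rightarrow>
   ('qa \<times> ('qb \<times> 'qc) set) \<Rightarrow> ('qa \<times> ('qb \<times> 'qc) set) \<Rightarrow> bool" where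
  "D_equiv Alph dA FA dB q0 FB dC r0 FC s t \<longleftrightarrow>
     (\<forall>w \<in> lists Alph.
        D_final FB FC (D_run dA FA dB q0 dC r0 s w) \<longleftrightarrow>
        D_final FB FC (D_run dA FA dB q0 dC r0 t w))"

definition saturated :: "('qb \<times> 'qc) set \<Rightarrow> bool" where
  "saturated S \<longleftrightarrow>
     (\<forall>qx qy rx ry. (qx, rx) \<in> S \<and> (qx, ry) \<in> S \<and> (qy, ry) \<in> S \<longrightarrow> (qy, rx) \<in> S)"

definition Sat :: "('qb \<times> 'qc) set \<Rightarrow> ('qb \<times> 'qc) set" where
  "Sat S = \<Inter> {T. S \<subseteq> T \<and> saturated T}"

end

theory Submission
  imports Defs
begin

text \<open>Saturation is compatible with everything \<open>D\<close> does to a tableau. Applying a letter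
  maps pairs componentwise, and the preimage of a saturated tableau under such a map is
  saturated, so \<open>Sat (h ` Sat S) = Sat (h ` S)\<close>; adding \<open>(q\<^sub>0, r\<^sub>0)\<close> likewise commutes with
  saturation up to saturation. Hence the tableaux reached from \<open>S\<close> and from \<open>Sat S\<close> along
  any word have the same saturation. Finally the pairs on which \<open>B\<close> and \<open>C\<close> agree form a
  saturated tableau, so a tableau contains a disagreeing pair iff its saturation does.\<close>

lemma saturated_Inter: "(\<And>T. T \<in> \<T> \<Longrightarrow> saturated T) \<Longrightarrow> saturated (\<Inter>\<T>)"
  unfolding saturated_def by blast

lemma saturated_Sat: "saturated (Sat S)"
  unfolding Sat_def by (rule saturated_Inter) blast

lemma Sat_subset: "S \<subseteq> Sat S"
  unfolding Sat_def by blast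

lemma Sat_least: "S \<subseteq> T \<Longrightarrow> saturated T \<Longrightarrow> Sat S \<subseteq> T"
  unfolding Sat_def by blast

lemma Sat_subset_saturated_iff: "saturated T \<Longrightarrow> Sat S \<subseteq> T \<longleftrightarrow> S \<subseteq> T"
  using Sat_least Sat_subset by (blast intro: subset_trans)

lemma Sat_mono: "S \<subseteq> T \<Longrightarrow> Sat S \<subseteq> Sat T"
  using Sat_least[OF _ saturated_Sat] Sat_subset by blast

lemma Sat_Sat [simp]: "Sat (Sat S) = Sat S"
  using Sat_least[OF order_refl saturated_Sat] Sat_subset by blast

lemma Sat_Un_Sat: "Sat (A \<union> Sat S) = Sat (A \<union> S)"
proof
  have "Sat S \<subseteq> Sat (A \<union> S)"
    by (rule Sat_mono) (rule Un_upper2)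
  then have "A \<union> Sat S \<subseteq> Sat (A \<union> S)"
    using Sat_subset[of "A \<union> S"] by (simp add: subset_iff)
  then show "Sat (A \<union> Sat S) \<subseteq> Sat (A \<union> S)"
    by (simp add: Sat_subset_saturated_iff saturated_Sat)
  show "Sat (A \<union> S) \<subseteq> Sat (A \<union> Sat S)"
    by (intro Sat_mono Un_mono order_refl Sat_subset)
qed

lemma saturated_vimage_map_prod:
  assumes "saturated T"
  shows "saturated (map_prod f g -` T)"
  unfolding saturated_def
proof (intro allI impI)
  fix qx qy rx ry
  assume "(qx, rx) \<in> map_prod f g -` T \<and> (qx, ry) \<in> map_prod f g -` T \<and> (qy, ry) \<in> map_prod f g -` T"
  then have "(f qx, g rx) \<in> T" "(f qx, g ry) \<in> T" "(f qy, g ry) \<in> T"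
    by simp_all
  with assms have "(f qy, g rx) \<in> T"
    unfolding saturated_def by blast
  then show "(qy, rx) \<in> map_prod f g -` T"
    by simp
qed

lemma Sat_image_Sat: "Sat (map_prod f g ` Sat S) = Sat (map_prod f g ` S)"
proof
  have "Sat S \<subseteq> map_prod f g -` Sat (map_prod f g ` S)"
    using Sat_subset[of "map_prod f g ` S"]
    by (intro Sat_least saturated_vimage_map_prod saturated_Sat) blast
  then have "map_prod f g ` Sat S \<subseteq> Sat (map_prod f g ` S)"
    by (simp only: image_subset_iff_subset_vimage)
  then show "Sat (map_prod f g ` Sat S) \<subseteq> Sat (map_prod f g ` S)"
    by (simp only: Sat_subset_saturated_iff saturated_Sat)
  show "Sat (map_prod f g ` S) \<subseteq> Sat (map_prod f g ` Sat S)"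
    by (intro Sat_mono image_mono Sat_subset)
qed

lemma Sat_Un_image_cong:
  assumes "Sat S = Sat S'"
  shows "Sat (A \<union> map_prod f g ` S) = Sat (A \<union> map_prod f g ` S')"
  by (metis Sat_Un_Sat Sat_image_Sat assms)

lemma D_step_eq:
  "D_step dA FA dB q0 dC r0 st a =
     (dA (fst st) a,
      (if dA (fst st) a \<in> FA then {(q0, r0)} else {}) \<union>
        map_prod (\<lambda>q. dB q a) (\<lambda>r. dC r a) ` snd st)"
  by (simp add: D_step_def Let_def map_prod_def)

lemma D_run_Cons:
  "D_run dA FA dB q0 dC r0 (i, S) (a # w) =
     D_run dA FA dB q0 dC r0 (dA i a, snd (D_step dA FA dB q0 dC r0 (i, S) a)) w"
  by (simp add: D_run_def D_step_eq)

lemma D_run_Sat_cong: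
  assumes "Sat S = Sat S'"
  shows "Sat (snd (D_run dA FA dB q0 dC r0 (i, S) w)) =
    Sat (snd (D_run dA FA dB q0 dC r0 (i, S') w))"
  using assms
proof (induction w arbitrary: i S S')
  case Nil
  then show ?case by (simp add: D_run_def)
next
  case (Cons a w)
  have "Sat (snd (D_step dA FA dB q0 dC r0 (i, S) a)) =
      Sat (snd (D_step dA FA dB q0 dC r0 (i, S') a))"
    unfolding D_step_eq snd_conv fst_conv by (rule Sat_Un_image_cong[OF Cons.prems])
  then show ?case
    unfolding D_run_Cons by (rule Cons.IH)
qed

lemma saturated_agreement: "saturated {(q, r). (q \<in> FB) = (r \<in> FC)}"
  unfolding saturated_def by auto

lemma D_final_iff_not_subset:
  "D_final FB FC st \<longleftrightarrow> \<not> snd st \<subseteq> {(q, r). (q \<in> FB) = (r \<in> FC)}"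
  unfolding D_final_def by auto

lemma D_final_Sat_cong:
  assumes "Sat (snd st) = Sat (snd st')"
  shows "D_final FB FC st \<longleftrightarrow> D_final FB FC st'"
  using assms Sat_subset_saturated_iff[OF saturated_agreement, of "snd st" FB FC]
    Sat_subset_saturated_iff[OF saturated_agreement, of "snd st'" FB FC]
  unfolding D_final_iff_not_subset by simp

theorem lemma5:
  fixes Alph :: "'s set"
    and QA :: "'qa set" and iA :: 'qa and FA :: "'qa set" and dA :: "'qa \<Rightarrow> 's \<Rightarrow> 'qa"
    and QB :: "'qb set" and q0 :: 'qb and FB :: "'qb set" and dB :: "'qb \<Rightarrow> 's \<Rightarrow> 'qb"
    and QC :: "'qc set" and r0 :: 'qc and FC :: "'qc set" and dC :: "'qc \<Rightarrow> 's \<Rightarrow> 'qc"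
    and i :: 'qa and S :: "('qb \<times> 'qc) set"
  assumes "complete_dfa Alph QA iA FA dA"
    and "complete_dfa Alph QB q0 FB dB"
    and "complete_dfa Alph QC r0 FC dC"
    and "i \<in> QA"
    and "S \<subseteq> QB \<times> QC"
  shows "D_equiv Alph dA FA dB q0 FB dC r0 FC (i, Sat S) (i, S)"
  unfolding D_equiv_def
  by (simp add: D_final_Sat_cong[OF D_run_Sat_cong[OF Sat_Sat]])

end
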